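(* Let $\alpha\in\mathbb R$, $k\in\mathbb Z$, and consider $\widehat\Delta_k=\partial_x^2-\frac{\alpha}{x}\partial_x-k^2|x|^{2\alpha}$ on $(-\infty,0)\cup(0,\infty)$ with weight $|x|^{-\alpha}$. Then the endpoints $+\infty$ and $-\infty$ are limit-point for every $k$. Regarding $0^+$ and $0^-$: (1) if $\alpha\le-3$ or $\alpha\ge1$, they are limit-point for every $k$; (2) if $-3<\alpha\le-1$, they are limit-circle for $k=0$ and limit-point for $k\ne0$; (3) if $-1<\alpha<1$, they are limit-circle for every $k$.
   Context: An endpoint $a$ of one of the intervals $(-\infty,0)$, $(0,\infty)$ (namely $-\infty,0^-,0^+,+\infty$) is limit-circle for $\widehat\Delta_k$ if every solution $u$ of $\widehat\Delta_ku=0$ on that interval belongs to $L^2(I_a,|x|^{-\alpha}dx)$ for some (equivalently any) subinterval $I_a$ of the form $(a,d)$ or $(d,a)$ with one endpoint equal to $a$; otherwise $a$ is limit-point. *)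

theory Defs
  imports "HOL-Analysis.Analysis"
begin

datatype endpoint = NegInf | ZeroMinus | ZeroPlus | PosInf

definition ep_interval :: "endpoint \<Rightarrow> real set" where
  "ep_interval a = (if a = NegInf \<or> a = ZeroMinus then {..<0} else {0<..})"

fun ep_subinterval :: "endpoint \<Rightarrow> real \<Rightarrow> real set" where
  "ep_subinterval NegInf d = {..<d}"
| "ep_subinterval ZeroMinus d = {d<..<0}"
| "ep_subinterval ZeroPlus d = {0<..<d}"
| "ep_subinterval PosInf d = {d<..}"

definition is_solution :: "real \<Rightarrow> int \<Rightarrow> real set \<Rightarrow> (real \<Rightarrow> real) \<Rightarrow> bool" where
  "is_solution \<alpha> k I u \<longleftrightarrow> (\<exists>u' u''. \<forall>x\<in>I.
      (u has_real_derivative u' x) (at x) \<and>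
      (u' has_real_derivative u'' x) (at x) \<and>
      u'' x - (\<alpha> / x) * u' x - (real_of_int k)^2 * \<bar>x\<bar> powr (2 * \<alpha>) * u x = 0)"

definition L2_near :: "real \<Rightarrow> endpoint \<Rightarrow> (real \<Rightarrow> real) \<Rightarrow> bool" where
  "L2_near \<alpha> a u \<longleftrightarrow> (\<exists>d\<in>ep_interval a.
      set_integrable lborel (ep_subinterval a d) (\<lambda>x. (u x)^2 * \<bar>x\<bar> powr (- \<alpha>)))"

definition limit_circle :: "real \<Rightarrow> int \<Rightarrow> endpoint \<Rightarrow> bool" where
  "limit_circle \<alpha> k a \<longleftrightarrow>
     (\<forall>u. is_solution \<alpha> k (ep_interval a) u \<longrightarrow> L2_near \<alpha> a u)"

definition limit_point :: "real \<Rightarrow> int \<Rightarrow> endpoint \<Rightarrow> bool" where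
  "limit_point \<alpha> k a \<longleftrightarrow> \<not> limit_circle \<alpha> k a"

end

theory Submission
  imports Defs
begin

text \<open>
  On the half-line \<open>x > 0\<close> the substitution \<open>t = powr_primitive \<alpha> x\<close>, a primitive of \<open>x powr \<alpha>\<close>,
  turns the equation into \<open>u_tt = k^2 u\<close>. Hence every solution is \<open>A + B t\<close> when \<open>k = 0\<close> and
  a combination of \<open>exp (k t)\<close> and \<open>exp (- k t)\<close> otherwise, and the question whether all
  solutions are square integrable against \<open>x powr (- \<alpha>)\<close> near an endpoint reduces to comparing
  these explicit functions with powers of \<open>x\<close>: a bound by an integrable power gives limit-circle,
  a solution whose weighted square is bounded below by \<open>c * x powr p\<close> with \<open>x powr p\<close> not
  integrable gives limit-point. The reflection \<open>x \<mapsto> - x\<close> preserves the equation, the weight and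
  square integrability, so the negative half-line behaves like the positive one.
\<close>

section \<open>Integrability of powers at \<open>0\<close> and at infinity\<close>

lemma set_integrable_continuous_bound:
  fixes f g :: "real \<Rightarrow> real"
  assumes "set_integrable lborel S g" "S \<in> sets borel" "continuous_on S f"
    and "\<And>x. x \<in> S \<Longrightarrow> \<bar>f x\<bar> \<le> g x"
  shows "set_integrable lborel S f"
proof (rule set_integrable_bound[OF assms(1)])
  show "set_borel_measurable lborel S f"
    using borel_measurable_continuous_on_indicator[OF assms(2,3)]
    by (simp add: set_borel_measurable_def)
  show "AE x in lborel. x \<in> S \<longrightarrow> norm (f x) \<le> norm (g x)"
    using assms(4) by (auto intro!: AE_I2 order_trans[OF _ abs_ge_self])
qed

lemma not_set_integrable_lower_bound:
  fixes f g :: "real \<Rightarrow> real"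
  assumes "\<not> set_integrable lborel S g" "S \<in> sets borel" "continuous_on S g"
    and "\<And>x. x \<in> S \<Longrightarrow> \<bar>g x\<bar> \<le> f x"
  shows "\<not> set_integrable lborel S f"
  using set_integrable_continuous_bound[OF _ assms(2-4)] assms(1) by blast

lemma inverse_not_set_integrable:
  assumes "S \<subseteq> {0<..}"
    and "\<And>M. \<exists>a b. 0 < a \<and> a \<le> b \<and> {a..b} \<subseteq> S \<and> M \<le> ln b - ln a"
  shows "\<not> set_integrable lborel S (\<lambda>x::real. 1 / x)"
proof
  assume "set_integrable lborel S (\<lambda>x::real. 1 / x)"
  then have int: "(\<lambda>x::real. 1 / x) integrable_on S"
    by (rule set_borel_integral_eq_integral)
  obtain a b where ab: "0 < a" "a \<le> b" "{a..b} \<subseteq> S"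
    and big: "integral S (\<lambda>x. 1 / x) + 1 \<le> ln b - ln a"
    using assms(2) by blast
  have "((\<lambda>x::real. 1 / x) has_integral (ln b - ln a)) {a..b}"
  proof (rule fundamental_theorem_of_calculus[OF ab(2)])
    fix x assume "x \<in> {a..b}"
    then have "0 < x" using ab(1) by auto
    then show "(ln has_vector_derivative 1 / x) (at x within {a..b})"
      by (auto intro!: derivative_eq_intros
          simp: has_real_derivative_iff_has_vector_derivative[symmetric])
  qed
  moreover have "integral {a..b} (\<lambda>x::real. 1 / x) \<le> integral S (\<lambda>x. 1 / x)"
    using ab assms(1) int calculation by (intro integral_subset_le) auto
  ultimately show False using big by (simp add: integral_unique)
qed

lemma powr_not_set_integrable_at_0:
  assumes "p \<le> -1" "0 < d"
  shows "\<not> set_integrable lborel {0<..<d} (\<lambda>x::real. x powr p)"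
proof (rule not_set_integrable_lower_bound)
  have "\<not> set_integrable lborel {0<..<d} (\<lambda>x::real. 1 / x)"
  proof (rule inverse_not_set_integrable)
    fix M :: real
    show "\<exists>a b. 0 < a \<and> a \<le> b \<and> {a..b} \<subseteq> {0<..<d} \<and> M \<le> ln b - ln a"
    proof (intro exI conjI)
      have "exp (- \<bar>M\<bar>) \<le> 1" by simp
      then show "d / 2 * exp (- \<bar>M\<bar>) \<le> d / 2"
        using assms(2) by (simp add: mult_le_cancel_left1)
      show "M \<le> ln (d / 2) - ln (d / 2 * exp (- \<bar>M\<bar>))"
        using assms(2) ln_mult[of "d / 2" "exp (- \<bar>M\<bar>)"] by simp
      show pos: "0 < d / 2 * exp (- \<bar>M\<bar>)"
        using assms(2) by simp
      show "{d / 2 * exp (- \<bar>M\<bar>)..d / 2} \<subseteq> {0<..<d}"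
        using pos assms(2) by (auto simp only: atLeastAtMost_iff greaterThanLessThan_iff)
    qed
  qed auto
  then show "\<not> set_integrable lborel {0<..<d} (\<lambda>x. d powr (p + 1) * (1 / x))"
    using assms(2) by (subst set_integrable_mult_right_iff) auto
  show "continuous_on {0<..<d} (\<lambda>x. d powr (p + 1) * (1 / x))"
    by (intro continuous_intros) auto
  fix x assume x: "x \<in> {0<..<d}"
  have "d powr (p + 1) \<le> x powr (p + 1)"
    using x assms by (intro powr_mono2') auto
  then have "d powr (p + 1) / x \<le> x powr (p + 1) / x"
    using x by (intro divide_right_mono) auto
  then show "\<bar>d powr (p + 1) * (1 / x)\<bar> \<le> x powr p"
    using x by (simp add: powr_add)
qed auto

lemma powr_not_set_integrable_at_top:
  assumes "-1 \<le> p" "0 < d"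
  shows "\<not> set_integrable lborel {d<..} (\<lambda>x::real. x powr p)"
proof (rule not_set_integrable_lower_bound)
  have "\<not> set_integrable lborel {d<..} (\<lambda>x::real. 1 / x)"
  proof (rule inverse_not_set_integrable)
    fix M :: real
    show "\<exists>a b. 0 < a \<and> a \<le> b \<and> {a..b} \<subseteq> {d<..} \<and> M \<le> ln b - ln a"
      using assms(2)
      by (intro exI[of _ "2 * d"] exI[of _ "2 * d * exp \<bar>M\<bar>"]) (auto simp: ln_mult)
  qed (use assms in auto)
  then show "\<not> set_integrable lborel {d<..} (\<lambda>x. d powr (p + 1) * (1 / x))"
    using assms(2) by (subst set_integrable_mult_right_iff) auto
  show "continuous_on {d<..} (\<lambda>x. d powr (p + 1) * (1 / x))"
    using assms(2) by (intro continuous_intros) auto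
  fix x assume x: "x \<in> {d<..}"
  have "d powr (p + 1) \<le> x powr (p + 1)"
    using x assms by (intro powr_mono2) auto
  then have "d powr (p + 1) / x \<le> x powr (p + 1) / x"
    using x assms by (intro divide_right_mono) auto
  then show "\<bar>d powr (p + 1) * (1 / x)\<bar> \<le> x powr p"
    using x assms by (simp add: powr_add)
qed auto

lemma powr_set_integrable_at_0:
  assumes "-1 < p" "0 \<le> d"
  shows "set_integrable lborel {0<..<d} (\<lambda>x::real. x powr p)"
proof -
  have "(\<lambda>x::real. x powr p) absolutely_integrable_on {0..d}"
    using integrable_on_powr_from_0[OF assms] by (subst absolutely_integrable_on_iff_nonneg) auto
  then have "set_integrable lborel {0..d} (\<lambda>x::real. x powr p)"
    by (simp add: absolutely_integrable_on_def set_integrable_def integrable_completion)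
  then show ?thesis by (rule set_integrable_subset) auto
qed

lemma abs_le_abs_of_int_mult: "k \<noteq> 0 \<Longrightarrow> \<bar>y\<bar> \<le> \<bar>of_int k * (y :: real)\<bar>"
proof -
  assume "k \<noteq> 0"
  then have "1 \<le> \<bar>real_of_int k\<bar>"
    by linarith
  then show ?thesis
    by (simp add: abs_mult mult_le_cancel_right1)
qed

lemma powr_le_cosh_sq_mult_powr: "x powr p \<le> (cosh (y :: real))\<^sup>2 * x powr p"
proof -
  have "1 \<le> (cosh y)\<^sup>2"
    using cosh_real_ge_1[of y] by (simp add: one_le_power)
  then show ?thesis
    by (simp add: mult_le_cancel_right1)
qed

lemma exp_abs_le_two_cosh: "exp \<bar>y\<bar> \<le> 2 * cosh (y :: real)"
  by (cases "0 \<le> y") (auto simp: cosh_field_def)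

lemma abs_le_cosh: "\<bar>y\<bar> \<le> cosh (y :: real)"
proof -
  have "(1 + \<bar>y\<bar> / 2)\<^sup>2 \<le> exp \<bar>y\<bar>"
    using exp_ge_one_plus_x_over_n_power_n[of 2 "\<bar>y\<bar>"] by simp
  moreover have "2 * \<bar>y\<bar> \<le> (1 + \<bar>y\<bar> / 2)\<^sup>2"
    using zero_le_power2[of "1 - \<bar>y\<bar> / 2"] by (simp add: power2_eq_square algebra_simps)
  ultimately show ?thesis
    using exp_abs_le_two_cosh[of y] by linarith
qed

lemma powr_le_exp:
  assumes "0 \<le> y" "0 < m"
  shows "(y / m) powr m \<le> exp (y :: real)"
proof -
  have "(y / m) powr m \<le> exp (y / m) powr m"
  proof (rule powr_mono2)
    show "y / m \<le> exp (y / m)"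
      using exp_ge_add_one_self[of "y / m"] by linarith
  qed (use assms in auto)
  also have "\<dots> = exp y"
    using assms(2) by (simp add: powr_def)
  finally show ?thesis .
qed

lemma mult_ln_sq_le_4:
  assumes "0 < x" "x < (1 :: real)"
  shows "x * (ln x)\<^sup>2 \<le> 4"
proof -
  have "- ln x \<le> 2 * (1 / x) powr (1 / 2)"
    using ln_powr_bound[of "1 / x" "1 / 2"] assms by (simp add: ln_div)
  then have "(- ln x)\<^sup>2 \<le> (2 * (1 / x) powr (1 / 2))\<^sup>2"
    using assms by (intro power_mono) auto
  also have "\<dots> = 4 / x"
    using assms by (simp add: power2_eq_square powr_add[symmetric] powr_minus_divide)
  finally show ?thesis
    using assms by (simp add: field_simps)
qed

section \<open>Solutions on the positive half-line\<close>

definition powr_primitive :: "real \<Rightarrow> real \<Rightarrow> real" where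
  "powr_primitive \<alpha> x = (if \<alpha> = -1 then ln x else x powr (\<alpha> + 1) / (\<alpha> + 1))"

lemma has_real_derivative_powr_primitive:
  assumes "0 < x"
  shows "(powr_primitive \<alpha> has_real_derivative x powr \<alpha>) (at x)"
proof (cases "\<alpha> = -1")
  case True
  then show ?thesis
    using assms by (auto simp: powr_primitive_def[abs_def] powr_minus_divide
        intro!: derivative_eq_intros)
next
  case False
  then have "((\<lambda>x. x powr (\<alpha> + 1) / (\<alpha> + 1)) has_real_derivative x powr \<alpha>) (at x)"
    using assms by (auto intro!: derivative_eq_intros simp: add_eq_0_iff2)
  then show ?thesis
    using False by (simp add: powr_primitive_def[abs_def])
qed

lemma powr_primitive_sq_mult_powr:
  assumes "\<alpha> \<noteq> -1" "0 < x"
  shows "(powr_primitive \<alpha> x)\<^sup>2 * x powr (- \<alpha>) = x powr (\<alpha> + 2) / (\<alpha> + 1)\<^sup>2"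
  using assms by (simp add: powr_primitive_def power2_eq_square powr_add[symmetric] field_simps)

lemma is_solution_cosh_powr_primitive:
  "is_solution \<alpha> k {0<..} (\<lambda>x. cosh (of_int k * powr_primitive \<alpha> x))"
  unfolding is_solution_def
proof (intro exI ballI conjI)
  fix x :: real assume "x \<in> {0<..}"
  then have x: "0 < x" by simp
  let ?T = "powr_primitive \<alpha>"
  show "((\<lambda>x. cosh (of_int k * ?T x)) has_real_derivative
      (\<lambda>x. of_int k * sinh (of_int k * ?T x) * x powr \<alpha>) x) (at x)"
    using x by (auto intro!: derivative_eq_intros has_real_derivative_powr_primitive)
  show "((\<lambda>x. of_int k * sinh (of_int k * ?T x) * x powr \<alpha>) has_real_derivative
      (\<lambda>x. (of_int k)\<^sup>2 * cosh (of_int k * ?T x) * x powr (2 * \<alpha>)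
          + of_int k * sinh (of_int k * ?T x) * (\<alpha> * x powr (\<alpha> - 1))) x) (at x)"
    using x by (auto intro!: derivative_eq_intros has_real_derivative_powr_primitive
        simp: power2_eq_square powr_add[symmetric] algebra_simps)
  show "(\<lambda>x. (of_int k)\<^sup>2 * cosh (of_int k * ?T x) * x powr (2 * \<alpha>)
          + of_int k * sinh (of_int k * ?T x) * (\<alpha> * x powr (\<alpha> - 1))) x
      - \<alpha> / x * (\<lambda>x. of_int k * sinh (of_int k * ?T x) * x powr \<alpha>) x
      - (of_int k)\<^sup>2 * \<bar>x\<bar> powr (2 * \<alpha>) * cosh (of_int k * ?T x) = 0"
    using x by (simp add: powr_diff)
qed

lemma is_solution_powr_primitive: "is_solution \<alpha> 0 {0<..} (powr_primitive \<alpha>)"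
  unfolding is_solution_def
proof (intro exI ballI conjI)
  fix x :: real assume "x \<in> {0<..}"
  then have x: "0 < x" by simp
  show "(powr_primitive \<alpha> has_real_derivative (\<lambda>x. x powr \<alpha>) x) (at x)"
    using has_real_derivative_powr_primitive[OF x] by simp
  show "((\<lambda>x. x powr \<alpha>) has_real_derivative (\<lambda>x. \<alpha> * x powr (\<alpha> - 1)) x) (at x)"
    using x by (auto intro!: derivative_eq_intros)
  show "(\<lambda>x. \<alpha> * x powr (\<alpha> - 1)) x - \<alpha> / x * (\<lambda>x. x powr \<alpha>) x
      - (of_int 0)\<^sup>2 * \<bar>x\<bar> powr (2 * \<alpha>) * powr_primitive \<alpha> x = 0"
    using x by (simp add: powr_diff)
qed

lemma is_solution_imp_continuous_on:
  "is_solution \<alpha> k I u \<Longrightarrow> continuous_on I u"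
  unfolding is_solution_def
  by (metis DERIV_isCont continuous_at_imp_continuous_on)

text \<open>With \<open>t = powr_primitive \<alpha> x\<close> one has \<open>du/dt = w\<close> and \<open>dw/dt = k\<^sup>2 u\<close>.\<close>
lemma is_solution_first_order_system:
  assumes "is_solution \<alpha> k {0<..} u"
  obtains w where
    "\<And>x. 0 < x \<Longrightarrow> (u has_real_derivative x powr \<alpha> * w x) (at x)"
    "\<And>x. 0 < x \<Longrightarrow> (w has_real_derivative (of_int k)\<^sup>2 * x powr \<alpha> * u x) (at x)"
proof -
  obtain u' u'' where H: "\<And>x. 0 < x \<Longrightarrow> (u has_real_derivative u' x) (at x) \<and>
      (u' has_real_derivative u'' x) (at x) \<and>
      u'' x - (\<alpha> / x) * u' x - (of_int k)\<^sup>2 * \<bar>x\<bar> powr (2 * \<alpha>) * u x = 0"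
    using assms unfolding is_solution_def by auto
  show ?thesis
  proof
    fix x :: real assume x: "0 < x"
    show "(u has_real_derivative x powr \<alpha> * (x powr (- \<alpha>) * u' x)) (at x)"
      using H[OF x] x by (simp add: powr_minus field_simps)
    have "((\<lambda>x. x powr (- \<alpha>) * u' x) has_real_derivative
        - \<alpha> * x powr (- \<alpha> - 1) * u' x + x powr (- \<alpha>) * u'' x) (at x)"
      using x H[OF x] by (auto intro!: derivative_eq_intros)
    also have "- \<alpha> * x powr (- \<alpha> - 1) * u' x + x powr (- \<alpha>) * u'' x
        = (of_int k)\<^sup>2 * x powr \<alpha> * u x"
      using x H[OF x]
      by (simp add: powr_diff powr_minus powr_add[symmetric] field_simps
          eq_diff_eq[symmetric])
    finally show "((\<lambda>x. x powr (- \<alpha>) * u' x) has_real_derivative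
        (of_int k)\<^sup>2 * x powr \<alpha> * u x) (at x)" .
  qed
qed

lemma has_real_derivative_zero_constant_pos:
  assumes "\<And>x. 0 < x \<Longrightarrow> (f has_real_derivative 0) (at x)"
  shows "\<exists>c. \<forall>x>0. f x = (c :: real)"
proof -
  have "\<exists>c. \<forall>x\<in>{0<..}. f x = (c :: real)"
    by (rule has_field_derivative_zero_constant)
      (auto intro: has_field_derivative_at_within assms)
  then show ?thesis by auto
qed

lemma is_solution_0_affine:
  assumes "is_solution \<alpha> 0 {0<..} u"
  obtains A B where "\<And>x. 0 < x \<Longrightarrow> u x = A + B * powr_primitive \<alpha> x"
proof -
  obtain w where u: "\<And>x. 0 < x \<Longrightarrow> (u has_real_derivative x powr \<alpha> * w x) (at x)"
    and w: "\<And>x. 0 < x \<Longrightarrow> (w has_real_derivative 0) (at x)"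
    using is_solution_first_order_system[OF assms] by auto
  obtain B where B: "\<And>x. 0 < x \<Longrightarrow> w x = B"
    using has_real_derivative_zero_constant_pos[OF w] by auto
  have "((\<lambda>x. u x - B * powr_primitive \<alpha> x) has_real_derivative 0) (at x)" if "0 < x" for x
    using u[OF that] B[OF that] has_real_derivative_powr_primitive[OF that]
    by (auto intro!: derivative_eq_intros)
  then obtain A where "\<And>x. 0 < x \<Longrightarrow> u x - B * powr_primitive \<alpha> x = A"
    using has_real_derivative_zero_constant_pos by blast
  then show ?thesis
    using that[of A B] by (simp add: algebra_simps)
qed

lemma is_solution_exp_combination:
  assumes "is_solution \<alpha> k {0<..} u" "k \<noteq> 0"
  obtains P Q where "\<And>x. 0 < x \<Longrightarrow>
    u x = P * exp (of_int k * powr_primitive \<alpha> x) + Q * exp (- (of_int k * powr_primitive \<alpha> x))"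
proof -
  let ?T = "powr_primitive \<alpha>" and ?k = "real_of_int k"
  obtain w where u: "\<And>x. 0 < x \<Longrightarrow> (u has_real_derivative x powr \<alpha> * w x) (at x)"
    and w: "\<And>x. 0 < x \<Longrightarrow> (w has_real_derivative ?k\<^sup>2 * x powr \<alpha> * u x) (at x)"
    using is_solution_first_order_system[OF assms(1)] by auto
  have conserved: "\<exists>c. \<forall>x>0. (u x + s * w x / ?k) * exp (- (s * ?k * ?T x)) = c"
    if s: "s\<^sup>2 = 1" for s
  proof -
    have "((\<lambda>x. (u x + s * w x / ?k) * exp (- (s * ?k * ?T x))) has_real_derivative 0) (at x)"
      if x: "0 < x" for x
    proof -
      have "((\<lambda>x. (u x + s * w x / ?k) * exp (- (s * ?k * ?T x))) has_real_derivative
          x powr \<alpha> * exp (- (s * ?k * ?T x)) * ((1 - s\<^sup>2) * w x)) (at x)"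
        using u[OF x] w[OF x] has_real_derivative_powr_primitive[OF x] assms(2)
        by (auto intro!: derivative_eq_intros simp: power2_eq_square field_simps)
      then show ?thesis using s by simp
    qed
    then show ?thesis
      by (rule has_real_derivative_zero_constant_pos)
  qed
  obtain F where F: "\<And>x. 0 < x \<Longrightarrow> (u x + w x / ?k) * exp (- (?k * ?T x)) = F"
    using conserved[of 1] by auto
  obtain G where G: "\<And>x. 0 < x \<Longrightarrow> (u x - w x / ?k) * exp (?k * ?T x) = G"
    using conserved[of "-1"] by auto
  show ?thesis
  proof (rule that[of "F / 2" "G / 2"])
    fix x :: real assume x: "0 < x"
    have e: "F / 2 * exp (?k * ?T x) = (u x + w x / ?k) / 2"
      "G / 2 * exp (- (?k * ?T x)) = (u x - w x / ?k) / 2"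
      using F[OF x, symmetric] G[OF x, symmetric] by (simp_all add: exp_minus field_simps)
    show "u x = F / 2 * exp (?k * ?T x) + G / 2 * exp (- (?k * ?T x))"
      unfolding e by (simp add: add_divide_distrib diff_divide_distrib)
  qed
qed

section \<open>Reflection in the origin\<close>

fun ep_reflect :: "endpoint \<Rightarrow> endpoint" where
  "ep_reflect NegInf = PosInf"
| "ep_reflect ZeroMinus = ZeroPlus"
| "ep_reflect ZeroPlus = ZeroMinus"
| "ep_reflect PosInf = NegInf"

lemma ep_reflect_ep_reflect [simp]: "ep_reflect (ep_reflect a) = a"
  by (cases a) auto

lemma ep_interval_ep_reflect: "ep_interval (ep_reflect a) = uminus ` ep_interval a"
  by (cases a) (auto simp: ep_interval_def image_iff intro: exI[of _ "- x" for x])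

lemma ep_subinterval_ep_reflect:
  "ep_subinterval (ep_reflect a) (- d) = uminus ` ep_subinterval a d"
  by (cases a) (auto simp: image_iff intro: exI[of _ "- x" for x])

lemma is_solution_reflect:
  assumes "is_solution \<alpha> k I u"
  shows "is_solution \<alpha> k (uminus ` I) (\<lambda>x. u (- x))"
proof -
  obtain u' u'' where H: "\<And>x. x \<in> I \<Longrightarrow> (u has_real_derivative u' x) (at x) \<and>
      (u' has_real_derivative u'' x) (at x) \<and>
      u'' x - (\<alpha> / x) * u' x - (of_int k)\<^sup>2 * \<bar>x\<bar> powr (2 * \<alpha>) * u x = 0"
    using assms unfolding is_solution_def by auto
  show ?thesis
    unfolding is_solution_def
  proof (intro exI ballI conjI)
    fix x assume "x \<in> uminus ` I"
    then have h: "(u has_real_derivative u' (- x)) (at (- x))"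
      "(u' has_real_derivative u'' (- x)) (at (- x))"
      "u'' (- x) + (\<alpha> / x) * u' (- x) - (of_int k)\<^sup>2 * \<bar>x\<bar> powr (2 * \<alpha>) * u (- x) = 0"
      using H[of "- x"] by auto
    show "((\<lambda>x. u (- x)) has_real_derivative (\<lambda>x. - u' (- x)) x) (at x)"
      using DERIV_mirror[of u "u' (- x)" x] h(1) by simp
    show "((\<lambda>x. - u' (- x)) has_real_derivative (\<lambda>x. u'' (- x)) x) (at x)"
      using DERIV_mirror[of u' "u'' (- x)" x] h(2) DERIV_minus by fastforce
    show "(\<lambda>x. u'' (- x)) x - \<alpha> / x * (\<lambda>x. - u' (- x)) x
        - (of_int k)\<^sup>2 * \<bar>x\<bar> powr (2 * \<alpha>) * u (- x) = 0"
      using h(3) by simp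
  qed
qed

lemma set_integrable_reflect_iff:
  fixes f :: "real \<Rightarrow> real"
  shows "set_integrable lborel (uminus ` S) (\<lambda>x. f (- x)) \<longleftrightarrow> set_integrable lborel S f"
proof -
  have e: "(\<lambda>x. indicator (uminus ` S) x *\<^sub>R f (- x))
      = (\<lambda>x. (\<lambda>y. indicator S y *\<^sub>R f y) (0 + (-1) * x))"
    by (auto simp: indicator_def image_iff intro!: ext) (metis minus_minus)
  show ?thesis
    unfolding set_integrable_def e by (subst lborel_integrable_real_affine_iff) auto
qed

lemma L2_near_ep_reflect:
  "L2_near \<alpha> (ep_reflect a) u \<longleftrightarrow> L2_near \<alpha> a (\<lambda>x. u (- x))"
proof -
  have "set_integrable lborel (ep_subinterval (ep_reflect a) (- d)) (\<lambda>x. (u x)\<^sup>2 * \<bar>x\<bar> powr - \<alpha>)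
      \<longleftrightarrow> set_integrable lborel (ep_subinterval a d) (\<lambda>x. (u (- x))\<^sup>2 * \<bar>x\<bar> powr - \<alpha>)" for d
    using set_integrable_reflect_iff[of "ep_subinterval a d" "\<lambda>x. (u (- x))\<^sup>2 * \<bar>x\<bar> powr - \<alpha>"]
    by (simp add: ep_subinterval_ep_reflect)
  moreover have "(\<exists>d\<in>ep_interval (ep_reflect a). P d) \<longleftrightarrow> (\<exists>d\<in>ep_interval a. P (- d))" for P
    by (simp add: ep_interval_ep_reflect)
  ultimately show ?thesis
    unfolding L2_near_def by simp
qed

lemma limit_circle_ep_reflect_if:
  assumes "limit_circle \<alpha> k a"
  shows "limit_circle \<alpha> k (ep_reflect a)"
  unfolding limit_circle_def
proof (intro allI impI)
  fix u assume "is_solution \<alpha> k (ep_interval (ep_reflect a)) u"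
  then have "is_solution \<alpha> k (ep_interval a) (\<lambda>x. u (- x))"
    using is_solution_reflect by (fastforce simp: ep_interval_ep_reflect image_image)
  then show "L2_near \<alpha> (ep_reflect a) u"
    using assms by (simp add: limit_circle_def L2_near_ep_reflect)
qed

lemma limit_circle_ep_reflect_iff:
  "limit_circle \<alpha> k (ep_reflect a) \<longleftrightarrow> limit_circle \<alpha> k a"
  using limit_circle_ep_reflect_if[of \<alpha> k a] limit_circle_ep_reflect_if[of \<alpha> k "ep_reflect a"]
  by auto

section \<open>Criteria for limit-point and limit-circle\<close>

lemma limit_point_ZeroPlus_if_lower_bound:
  assumes v: "is_solution \<alpha> k {0<..} v" and "0 < c" "p \<le> -1"
    and bound: "\<And>x. 0 < x \<Longrightarrow> x < 1 \<Longrightarrow> c * x powr p \<le> (v x)\<^sup>2 * x powr (- \<alpha>)"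
  shows "limit_point \<alpha> k ZeroPlus"
  unfolding limit_point_def limit_circle_def
proof
  assume "\<forall>u. is_solution \<alpha> k (ep_interval ZeroPlus) u \<longrightarrow> L2_near \<alpha> ZeroPlus u"
  then obtain d where "0 < d"
    and int_d: "set_integrable lborel {0<..<d} (\<lambda>x. (v x)\<^sup>2 * \<bar>x\<bar> powr (- \<alpha>))"
    using v by (auto simp: L2_near_def ep_interval_def)
  from int_d have int: "set_integrable lborel {0<..<min d 1} (\<lambda>x. (v x)\<^sup>2 * \<bar>x\<bar> powr (- \<alpha>))"
    by (rule set_integrable_subset) auto
  have "\<not> set_integrable lborel {0<..<min d 1} (\<lambda>x. (v x)\<^sup>2 * \<bar>x\<bar> powr (- \<alpha>))"
  proof (rule not_set_integrable_lower_bound)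
    show "\<not> set_integrable lborel {0<..<min d 1} (\<lambda>x. c * x powr p)"
      using powr_not_set_integrable_at_0[of p "min d 1"] assms(2,3) \<open>0 < d\<close>
      by (subst set_integrable_mult_right_iff) auto
    show "continuous_on {0<..<min d 1} (\<lambda>x. c * x powr p)"
      by (intro continuous_intros) auto
  qed (use bound \<open>0 < c\<close> in auto)
  then show False using int by blast
qed

lemma limit_point_PosInf_if_lower_bound:
  assumes v: "is_solution \<alpha> k {0<..} v" and "0 < c" "-1 \<le> p"
    and bound: "\<And>x. 1 < x \<Longrightarrow> c * x powr p \<le> (v x)\<^sup>2 * x powr (- \<alpha>)"
  shows "limit_point \<alpha> k PosInf"
  unfolding limit_point_def limit_circle_def
proof
  assume "\<forall>u. is_solution \<alpha> k (ep_interval PosInf) u \<longrightarrow> L2_near \<alpha> PosInf u"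
  then obtain d where "0 < d"
    and int_d: "set_integrable lborel {d<..} (\<lambda>x. (v x)\<^sup>2 * \<bar>x\<bar> powr (- \<alpha>))"
    using v by (auto simp: L2_near_def ep_interval_def)
  from int_d have int: "set_integrable lborel {max d 1<..} (\<lambda>x. (v x)\<^sup>2 * \<bar>x\<bar> powr (- \<alpha>))"
    by (rule set_integrable_subset) auto
  have "\<not> set_integrable lborel {max d 1<..} (\<lambda>x. (v x)\<^sup>2 * \<bar>x\<bar> powr (- \<alpha>))"
  proof (rule not_set_integrable_lower_bound)
    show "\<not> set_integrable lborel {max d 1<..} (\<lambda>x. c * x powr p)"
      using powr_not_set_integrable_at_top[of p "max d 1"] assms(2,3)
      by (subst set_integrable_mult_right_iff) auto
    show "continuous_on {max d 1<..} (\<lambda>x. c * x powr p)"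
      by (intro continuous_intros) auto
  qed (use bound \<open>0 < c\<close> in auto)
  then show False using int by blast
qed

lemma limit_circle_ZeroPlus_if_dominated:
  assumes "\<And>u. is_solution \<alpha> k {0<..} u \<Longrightarrow> \<exists>g. set_integrable lborel {0<..<1} g \<and>
      (\<forall>x\<in>{0<..<1}. (u x)\<^sup>2 * x powr (- \<alpha>) \<le> g x)"
  shows "limit_circle \<alpha> k ZeroPlus"
  unfolding limit_circle_def
proof (intro allI impI)
  fix u assume "is_solution \<alpha> k (ep_interval ZeroPlus) u"
  then have u: "is_solution \<alpha> k {0<..} u"
    by (simp add: ep_interval_def)
  obtain g where int_g: "set_integrable lborel {0<..<1} g"
    and g: "\<And>x. x \<in> {0<..<1} \<Longrightarrow> (u x)\<^sup>2 * x powr (- \<alpha>) \<le> g x"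
    using assms[OF u] by blast
  from int_g have "set_integrable lborel {0<..<1} (\<lambda>x. (u x)\<^sup>2 * \<bar>x\<bar> powr (- \<alpha>))"
  proof (rule set_integrable_continuous_bound)
    have "continuous_on {0<..<1} u"
      using is_solution_imp_continuous_on[OF u] by (rule continuous_on_subset) auto
    then show "continuous_on {0<..<1} (\<lambda>x. (u x)\<^sup>2 * \<bar>x\<bar> powr (- \<alpha>))"
      by (intro continuous_intros) auto
  qed (use g in auto)
  then show "L2_near \<alpha> ZeroPlus u"
    unfolding L2_near_def ep_interval_def by force
qed

section \<open>Classification of the endpoints\<close>

lemma exists_solution_powr_le_weighted_sq:
  assumes "\<alpha> \<noteq> -1"
  obtains v where "is_solution \<alpha> k {0<..} v"
    "\<And>x. 0 < x \<Longrightarrow> 1 / (\<alpha> + 1)\<^sup>2 * x powr (\<alpha> + 2) \<le> (v x)\<^sup>2 * x powr (- \<alpha>)"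
proof -
  obtain v where v: "is_solution \<alpha> k {0<..} v" and sq: "\<And>x. (powr_primitive \<alpha> x)\<^sup>2 \<le> (v x)\<^sup>2"
  proof (cases "k = 0")
    case True
    then show ?thesis
      using that[of "powr_primitive \<alpha>"] is_solution_powr_primitive[of \<alpha>] by simp
  next
    case False
    have "(powr_primitive \<alpha> x)\<^sup>2 \<le> (cosh (of_int k * powr_primitive \<alpha> x))\<^sup>2" for x
    proof -
      have "\<bar>powr_primitive \<alpha> x\<bar> \<le> \<bar>of_int k * powr_primitive \<alpha> x\<bar>"
        using False by (rule abs_le_abs_of_int_mult)
      also have "\<dots> \<le> cosh (of_int k * powr_primitive \<alpha> x)"
        by (rule abs_le_cosh)
      finally show ?thesis
        by (metis abs_ge_zero power2_abs power_mono)
    qed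
    then show ?thesis
      using that[OF is_solution_cosh_powr_primitive] by blast
  qed
  show ?thesis
  proof (rule that[OF v])
    fix x :: real assume "0 < x"
    have "x powr (\<alpha> + 2) / (\<alpha> + 1)\<^sup>2 = (powr_primitive \<alpha> x)\<^sup>2 * x powr (- \<alpha>)"
      using powr_primitive_sq_mult_powr[OF assms \<open>0 < x\<close>] by simp
    also have "\<dots> \<le> (v x)\<^sup>2 * x powr (- \<alpha>)"
      using sq[of x] by (rule mult_right_mono) simp
    finally show "1 / (\<alpha> + 1)\<^sup>2 * x powr (\<alpha> + 2) \<le> (v x)\<^sup>2 * x powr (- \<alpha>)"
      by simp
  qed
qed

lemma set_integrable_powr_primitive_sq_mult_powr:
  assumes "-3 < \<alpha>" "\<alpha> < 1"
  shows "set_integrable lborel {0<..<1} (\<lambda>x. (powr_primitive \<alpha> x)\<^sup>2 * x powr (- \<alpha>))"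
proof (cases "\<alpha> = -1")
  case True
  show ?thesis
  proof (rule set_integrable_continuous_bound)
    show "set_integrable lborel {0<..<1} (\<lambda>x::real. 4 * x powr 0)"
      using powr_set_integrable_at_0[of 0 1] by simp
    show "continuous_on {0<..<1} (\<lambda>x. (powr_primitive \<alpha> x)\<^sup>2 * x powr (- \<alpha>))"
      using True by (auto simp: powr_primitive_def intro!: continuous_intros)
  qed (use True mult_ln_sq_le_4 in \<open>auto simp: powr_primitive_def mult.commute\<close>)
next
  case False
  have "set_integrable lborel {0<..<1} (\<lambda>x. x powr (\<alpha> + 2) / (\<alpha> + 1)\<^sup>2)"
    using powr_set_integrable_at_0[of "\<alpha> + 2" 1] assms by simp
  then show ?thesis
    by (rule set_integrable_cong[THEN iffD1, rotated -1])
      (auto simp: powr_primitive_sq_mult_powr[OF False])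
qed

lemma exp_abs_powr_primitive_lower_bound:
  assumes "-3 < \<alpha>" "\<alpha> \<le> -1"
  obtains C where "0 < C"
    "\<And>x. 0 < x \<Longrightarrow> x < 1 \<Longrightarrow> C * x powr ((\<alpha> - 1) / 2) \<le> exp \<bar>powr_primitive \<alpha> x\<bar>"
proof (cases "\<alpha> = -1")
  case True
  have "x powr - 1 \<le> exp \<bar>ln x\<bar>" if "0 < x" "x < 1" for x :: real
  proof -
    have "\<bar>ln x\<bar> = - ln x"
      using that by simp
    then show ?thesis
      using that by (simp add: powr_minus_divide exp_minus divide_inverse)
  qed
  then show ?thesis
    using that[of 1] True by (simp add: powr_primitive_def)
next
  case False
  define \<beta> where "\<beta> = - (\<alpha> + 1)"
  define m where "m = (\<beta> + 2) / (2 * \<beta>)"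
  have \<beta>: "0 < \<beta>" "\<beta> < 2" and m: "0 < m"
    using assms False by (auto simp: \<beta>_def m_def)
  show ?thesis
  proof (rule that[of "1 / (\<beta> * m) powr m"])
    show "0 < 1 / (\<beta> * m) powr m"
      using \<beta> m by simp
    fix x :: real assume x: "0 < x" "x < 1"
    have exponent: "(\<alpha> - 1) / 2 = - (\<beta> * m)"
      using \<beta> by (simp add: m_def \<beta>_def field_simps)
    have "1 / (\<beta> * m) powr m * x powr ((\<alpha> - 1) / 2) = (x powr (- \<beta>) / \<beta> / m) powr m"
      unfolding exponent using x \<beta> m by (simp add: powr_divide powr_powr)
    also have "\<dots> \<le> exp (x powr (- \<beta>) / \<beta>)"
      using \<beta> m by (intro powr_le_exp) auto
    also have "x powr (- \<beta>) / \<beta> = \<bar>powr_primitive \<alpha> x\<bar>"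
      using False x \<beta> by (simp add: powr_primitive_def \<beta>_def abs_divide add.commute)
    finally show "1 / (\<beta> * m) powr m * x powr ((\<alpha> - 1) / 2) \<le> exp \<bar>powr_primitive \<alpha> x\<bar>" .
  qed
qed

lemma limit_point_PosInf: "limit_point \<alpha> k PosInf"
proof (cases "\<alpha> \<le> 1")
  case True
  show ?thesis
    by (rule limit_point_PosInf_if_lower_bound[OF is_solution_cosh_powr_primitive, of 1 "- \<alpha>"])
      (use True powr_le_cosh_sq_mult_powr in auto)
next
  case False
  then have "\<alpha> \<noteq> -1" by simp
  then obtain v where "is_solution \<alpha> k {0<..} v"
    "\<And>x. 0 < x \<Longrightarrow> 1 / (\<alpha> + 1)\<^sup>2 * x powr (\<alpha> + 2) \<le> (v x)\<^sup>2 * x powr (- \<alpha>)"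
    using exists_solution_powr_le_weighted_sq[where k = k] by blast
  then show ?thesis
    using False
    by (intro limit_point_PosInf_if_lower_bound[of \<alpha> k v "1 / (\<alpha> + 1)\<^sup>2" "\<alpha> + 2"]) auto
qed

lemma limit_point_ZeroPlus_outer:
  assumes "\<alpha> \<le> -3 \<or> 1 \<le> \<alpha>"
  shows "limit_point \<alpha> k ZeroPlus"
proof (cases "1 \<le> \<alpha>")
  case True
  show ?thesis
    by (rule limit_point_ZeroPlus_if_lower_bound[OF is_solution_cosh_powr_primitive, of 1 "- \<alpha>"])
      (use True powr_le_cosh_sq_mult_powr in auto)
next
  case False
  then have "\<alpha> \<le> -3" "\<alpha> \<noteq> -1" using assms by simp_all
  from this(2) obtain v where "is_solution \<alpha> k {0<..} v"
    "\<And>x. 0 < x \<Longrightarrow> 1 / (\<alpha> + 1)\<^sup>2 * x powr (\<alpha> + 2) \<le> (v x)\<^sup>2 * x powr (- \<alpha>)"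
    using exists_solution_powr_le_weighted_sq[where k = k] by blast
  then show ?thesis
    using \<open>\<alpha> \<le> -3\<close>
    by (intro limit_point_ZeroPlus_if_lower_bound[of \<alpha> k v "1 / (\<alpha> + 1)\<^sup>2" "\<alpha> + 2"]) auto
qed

lemma limit_point_ZeroPlus_middle:
  assumes "-3 < \<alpha>" "\<alpha> \<le> -1" "k \<noteq> 0"
  shows "limit_point \<alpha> k ZeroPlus"
proof -
  let ?T = "powr_primitive \<alpha>"
  obtain C where "0 < C"
    and C: "\<And>x. 0 < x \<Longrightarrow> x < 1 \<Longrightarrow> C * x powr ((\<alpha> - 1) / 2) \<le> exp \<bar>?T x\<bar>"
    using exp_abs_powr_primitive_lower_bound[OF assms(1,2)] by blast
  show ?thesis
  proof (rule limit_point_ZeroPlus_if_lower_bound[OF is_solution_cosh_powr_primitive, of "C\<^sup>2 / 4" "-1"])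
    fix x :: real assume x: "0 < x" "x < 1"
    have "\<bar>?T x\<bar> \<le> \<bar>of_int k * ?T x\<bar>"
      using assms(3) by (rule abs_le_abs_of_int_mult)
    then have "C * x powr ((\<alpha> - 1) / 2) \<le> 2 * cosh (of_int k * ?T x)"
      using C[OF x] exp_abs_le_two_cosh[of "of_int k * ?T x"] by (smt (verit) exp_le_cancel_iff)
    then have "(C * x powr ((\<alpha> - 1) / 2))\<^sup>2 \<le> (2 * cosh (of_int k * ?T x))\<^sup>2"
      using \<open>0 < C\<close> by (intro power_mono) auto
    then have bound: "(C * x powr ((\<alpha> - 1) / 2))\<^sup>2 / 4 * x powr (- \<alpha>)
        \<le> (cosh (of_int k * ?T x))\<^sup>2 * x powr (- \<alpha>)"
      by (intro mult_right_mono) (auto simp: power_mult_distrib)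
    have "x powr ((\<alpha> - 1) / 2) * x powr ((\<alpha> - 1) / 2) * x powr (- \<alpha>) = x powr -1"
      unfolding powr_add[symmetric] by (simp add: field_simps)
    then have "(C * x powr ((\<alpha> - 1) / 2))\<^sup>2 / 4 * x powr (- \<alpha>) = C\<^sup>2 / 4 * x powr -1"
      by (simp add: power2_eq_square field_simps)
    with bound show "C\<^sup>2 / 4 * x powr -1 \<le> (cosh (of_int k * ?T x))\<^sup>2 * x powr (- \<alpha>)"
      by simp
  qed (use \<open>0 < C\<close> in auto)
qed

lemma limit_circle_ZeroPlus_0:
  assumes "-3 < \<alpha>" "\<alpha> < 1"
  shows "limit_circle \<alpha> 0 ZeroPlus"
proof (rule limit_circle_ZeroPlus_if_dominated)
  fix u assume "is_solution \<alpha> 0 {0<..} u"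
  then obtain A B where u: "\<And>x. 0 < x \<Longrightarrow> u x = A + B * powr_primitive \<alpha> x"
    using is_solution_0_affine by metis
  let ?g = "\<lambda>x. 2 * A\<^sup>2 * x powr (- \<alpha>) + 2 * B\<^sup>2 * ((powr_primitive \<alpha> x)\<^sup>2 * x powr (- \<alpha>))"
  have "set_integrable lborel {0<..<1} ?g"
    using powr_set_integrable_at_0[of "- \<alpha>" 1] set_integrable_powr_primitive_sq_mult_powr[OF assms]
      assms by (intro set_integral_add(1) set_integrable_mult_right) auto
  moreover have "(u x)\<^sup>2 * x powr (- \<alpha>) \<le> ?g x" if "x \<in> {0<..<1}" for x
  proof -
    have "(A + B * powr_primitive \<alpha> x)\<^sup>2 \<le> 2 * A\<^sup>2 + 2 * B\<^sup>2 * (powr_primitive \<alpha> x)\<^sup>2"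
      using zero_le_power2[of "A - B * powr_primitive \<alpha> x"]
      by (simp add: power2_eq_square algebra_simps)
    then have "(A + B * powr_primitive \<alpha> x)\<^sup>2 * x powr (- \<alpha>)
        \<le> (2 * A\<^sup>2 + 2 * B\<^sup>2 * (powr_primitive \<alpha> x)\<^sup>2) * x powr (- \<alpha>)"
      by (rule mult_right_mono) simp
    then show ?thesis
      using that u[of x] by (simp add: algebra_simps)
  qed
  ultimately show "\<exists>g. set_integrable lborel {0<..<1} g \<and>
      (\<forall>x\<in>{0<..<1}. (u x)\<^sup>2 * x powr (- \<alpha>) \<le> g x)"
    by blast
qed

lemma limit_circle_ZeroPlus_inner:
  assumes "-1 < \<alpha>" "\<alpha> < 1"
  shows "limit_circle \<alpha> k ZeroPlus"
proof (cases "k = 0")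
  case True
  then show ?thesis
    using limit_circle_ZeroPlus_0 assms by simp
next
  case False
  show ?thesis
  proof (rule limit_circle_ZeroPlus_if_dominated)
    let ?T = "powr_primitive \<alpha>" and ?k = "real_of_int k"
    fix u assume "is_solution \<alpha> k {0<..} u"
    then obtain P Q where u: "\<And>x. 0 < x \<Longrightarrow> u x = P * exp (?k * ?T x) + Q * exp (- (?k * ?T x))"
      using is_solution_exp_combination False by metis
    define M where "M = (\<bar>P\<bar> + \<bar>Q\<bar>) * exp (\<bar>?k\<bar> / (\<alpha> + 1))"
    have "set_integrable lborel {0<..<1} (\<lambda>x. M\<^sup>2 * x powr (- \<alpha>))"
      using powr_set_integrable_at_0[of "- \<alpha>" 1] assms by simp
    moreover have "(u x)\<^sup>2 * x powr (- \<alpha>) \<le> M\<^sup>2 * x powr (- \<alpha>)" if x: "x \<in> {0<..<1}" for x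
    proof -
      have "x powr (\<alpha> + 1) \<le> 1"
        using x assms by (intro powr_le1) auto
      then have "\<bar>?T x\<bar> \<le> 1 / (\<alpha> + 1)"
        using x assms by (auto simp: powr_primitive_def divide_right_mono)
      then have "\<bar>?k\<bar> * \<bar>?T x\<bar> \<le> \<bar>?k\<bar> * (1 / (\<alpha> + 1))"
        by (rule mult_left_mono) simp
      then have "\<bar>?k * ?T x\<bar> \<le> \<bar>?k\<bar> / (\<alpha> + 1)"
        by (simp add: abs_mult)
      then have "exp (?k * ?T x) \<le> exp (\<bar>?k\<bar> / (\<alpha> + 1))"
        "exp (- (?k * ?T x)) \<le> exp (\<bar>?k\<bar> / (\<alpha> + 1))"
        by auto
      then have "\<bar>u x\<bar> \<le> M"
        using u[of x] x unfolding M_def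
        by (auto simp: abs_mult distrib_right
            intro!: order_trans[OF abs_triangle_ineq] add_mono mult_left_mono)
      then have "(u x)\<^sup>2 \<le> M\<^sup>2"
        by (metis abs_ge_zero power2_abs power_mono)
      then show ?thesis
        by (rule mult_right_mono) simp
    qed
    ultimately show "\<exists>g. set_integrable lborel {0<..<1} g \<and>
        (\<forall>x\<in>{0<..<1}. (u x)\<^sup>2 * x powr (- \<alpha>) \<le> g x)"
      by blast
  qed
qed

theorem mainTheorem7:
  fixes \<alpha> :: real and k :: int
  shows "(limit_point \<alpha> k PosInf \<and> limit_point \<alpha> k NegInf)
    \<and> ((\<alpha> \<le> -3 \<or> \<alpha> \<ge> 1) \<longrightarrow> limit_point \<alpha> k ZeroPlus \<and> limit_point \<alpha> k ZeroMinus)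
    \<and> ((-3 < \<alpha> \<and> \<alpha> \<le> -1) \<longrightarrow>
          (k = 0 \<longrightarrow> limit_circle \<alpha> k ZeroPlus \<and> limit_circle \<alpha> k ZeroMinus)
        \<and> (k \<noteq> 0 \<longrightarrow> limit_point \<alpha> k ZeroPlus \<and> limit_point \<alpha> k ZeroMinus))
    \<and> ((-1 < \<alpha> \<and> \<alpha> < 1) \<longrightarrow> limit_circle \<alpha> k ZeroPlus \<and> limit_circle \<alpha> k ZeroMinus)"
proof -
  have "limit_circle \<alpha> k NegInf \<longleftrightarrow> limit_circle \<alpha> k PosInf"
    "limit_circle \<alpha> k ZeroMinus \<longleftrightarrow> limit_circle \<alpha> k ZeroPlus"
    using limit_circle_ep_reflect_iff[of \<alpha> k PosInf] limit_circle_ep_reflect_iff[of \<alpha> k ZeroPlus]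
    by simp_all
  then show ?thesis
    using limit_point_PosInf[of \<alpha> k] limit_point_ZeroPlus_outer[of \<alpha> k]
      limit_point_ZeroPlus_middle[of \<alpha> k] limit_circle_ZeroPlus_0[of \<alpha>]
      limit_circle_ZeroPlus_inner[of \<alpha> k]
    unfolding limit_point_def by auto
qed

end
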